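(* Let $n\ge 3$ and $m\ge 2$ be integers, and let $F$, $R$ be as in the context. In the group $F/[R,F]$ the following hold: (1) for $1\le i<j-1\le n-2$, the order of $[s_i,s_j]$ divides $m$; (2) for $1\le i\le n-2$, the order of $[s_i,s_{i+1},s_i]$ divides $m$, and the order of $[s_i,s_{i+1},s_is_{i+1}^{-1}]$ divides $\gcd\!\big(m,\binom{m}{2}\big)$; (3) for $1\le i\le n-3$, the order of $[[s_i,s_{i+1}],[s_{i+1},s_{i+2}]]$ divides $\gcd(2,m)$.
   Context: Commutator conventions: $[a,b]=a^{-1}b^{-1}ab$, $a^b=b^{-1}ab$, and commutators are left-normed: $[a_1,\dots,a_k]=[[a_1,\dots,a_{k-1}],a_k]$. Let $F$ be the free group on $s_1,\dots,s_{n-1}$ and let $R$ be the normal closure in $F$ of the following relators: $s_i^m$ ($1\le i\le n-1$); $[s_i,s_j]$ ($1\le i<j-1\le n-2$); $[s_i,s_{i+1},s_i]$ and $[s_i,s_{i+1},s_{i+1}]$ ($1\le i\le n-2$); $[[s_i,s_{i+1}],[s_{i+1},s_{i+2}]]$ ($1\le i\le n-3$). It is known that $F/R\cong \mathrm{UT}_n(\mathbb Z/m\mathbb Z)$ (the group of upper unitriangular $n\times n$ matrices over $\mathbb Z/m\mathbb Z$) via $s_i\mapsto I+E_{i,i+1}$. *)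

theory Defs
  imports "HOL-Algebra.Algebra"
begin

text \<open>Free group on generators s_1,...,s_(n-1), realised as reduced words.
  A letter (i, True) stands for s_i and (i, False) for s_i^-1.\<close>

type_synonym letter = "nat \<times> bool"

definition inverse_letters :: "letter \<Rightarrow> letter \<Rightarrow> bool" where
  "inverse_letters x y \<longleftrightarrow> fst x = fst y \<and> snd x \<noteq> snd y"

definition reduced :: "letter list \<Rightarrow> bool" where
  "reduced w \<longleftrightarrow> (\<forall>k. Suc k < length w \<longrightarrow> \<not> inverse_letters (w ! k) (w ! Suc k))"

definition push_letter :: "letter \<Rightarrow> letter list \<Rightarrow> letter list" where
  "push_letter x ys = (case ys of [] \<Rightarrow> [x]
                        | y # ys' \<Rightarrow> (if inverse_letters x y then ys' else x # y # ys'))"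

definition normalize :: "letter list \<Rightarrow> letter list" where
  "normalize w = foldr push_letter w []"

definition free_grp :: "nat \<Rightarrow> letter list monoid" where
  "free_grp n = \<lparr>carrier = {w. reduced w \<and> (\<forall>x\<in>set w. 1 \<le> fst x \<and> fst x \<le> n - 1)},
                 monoid.mult = (\<lambda>u v. normalize (u @ v)),
                 one = []\<rparr>"

definition gen :: "nat \<Rightarrow> letter list" where
  "gen i = [(i, True)]"

text \<open>Commutator convention [a,b] = a^-1 b^-1 a b.\<close>
definition comm :: "('a, 'b) monoid_scheme \<Rightarrow> 'a \<Rightarrow> 'a \<Rightarrow> 'a" where
  "comm G a b = inv\<^bsub>G\<^esub> a \<otimes>\<^bsub>G\<^esub> inv\<^bsub>G\<^esub> b \<otimes>\<^bsub>G\<^esub> a \<otimes>\<^bsub>G\<^esub> b"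

definition normal_closure :: "('a, 'b) monoid_scheme \<Rightarrow> 'a set \<Rightarrow> 'a set" where
  "normal_closure G S = generate G {g \<otimes>\<^bsub>G\<^esub> r \<otimes>\<^bsub>G\<^esub> inv\<^bsub>G\<^esub> g | g r. g \<in> carrier G \<and> r \<in> S}"

definition comm_subgroup :: "('a, 'b) monoid_scheme \<Rightarrow> 'a set \<Rightarrow> 'a set \<Rightarrow> 'a set" where
  "comm_subgroup G A B = generate G {comm G a b | a b. a \<in> A \<and> b \<in> B}"

definition UT_relators :: "nat \<Rightarrow> nat \<Rightarrow> letter list set" where
  "UT_relators n m =
     {gen i [^]\<^bsub>free_grp n\<^esub> m | i. 1 \<le> i \<and> i \<le> n - 1}
   \<union> {comm (free_grp n) (gen i) (gen j) | i j. 1 \<le> i \<and> i < j - 1 \<and> j - 1 \<le> n - 2}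
   \<union> {comm (free_grp n) (comm (free_grp n) (gen i) (gen (i+1))) (gen i) | i. 1 \<le> i \<and> i \<le> n - 2}
   \<union> {comm (free_grp n) (comm (free_grp n) (gen i) (gen (i+1))) (gen (i+1)) | i. 1 \<le> i \<and> i \<le> n - 2}
   \<union> {comm (free_grp n) (comm (free_grp n) (gen i) (gen (i+1)))
                          (comm (free_grp n) (gen (i+1)) (gen (i+2))) | i. 1 \<le> i \<and> i \<le> n - 3}"

definition UT_R :: "nat \<Rightarrow> nat \<Rightarrow> letter list set" where
  "UT_R n m = normal_closure (free_grp n) (UT_relators n m)"

definition RF :: "nat \<Rightarrow> nat \<Rightarrow> letter list set" where
  "RF n m = comm_subgroup (free_grp n) (UT_R n m) (carrier (free_grp n))"

definition Q :: "nat \<Rightarrow> nat \<Rightarrow> letter list set monoid" where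
  "Q n m = free_grp n Mod RF n m"

definition proj :: "nat \<Rightarrow> nat \<Rightarrow> letter list \<Rightarrow> letter list set" where
  "proj n m g = RF n m #>\<^bsub>free_grp n\<^esub> g"

end

theory Submission
  imports Defs
begin

(* Every element of R becomes central in F/[R,F].  Hence the theorem is really a statement
   about any group H with a homomorphism F -> H that sends the relators of UT_n into the
   centre of H, and it is proved in that generality. *)

section \<open>The free group on the letters\<close>

definition flip :: "letter \<Rightarrow> letter" where
  "flip x = (fst x, \<not> snd x)"

lemma inverse_letters_iff_flip: "inverse_letters x y \<longleftrightarrow> y = flip x"
  by (cases x; cases y) (auto simp: inverse_letters_def flip_def)

lemma reduced_Nil [simp]: "reduced []"
  by (simp add: reduced_def)

lemma reduced_Cons:
  "reduced (x # ys) \<longleftrightarrow> reduced ys \<and> (ys = [] \<or> \<not> inverse_letters x (hd ys))"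
  unfolding reduced_def
  by (cases ys) (auto simp: All_less_Suc2 nth_Cons' split: if_splits)

lemma reduced_push_letter: "reduced ys \<Longrightarrow> reduced (push_letter x ys)"
  by (cases ys) (auto simp: push_letter_def reduced_Cons)

lemma push_letter_cancel:
  assumes "reduced ys"
  shows "push_letter (flip x) (push_letter x ys) = ys"
proof (cases ys)
  case Nil
  then show ?thesis by (simp add: push_letter_def inverse_letters_iff_flip flip_def)
next
  case (Cons y ys')
  show ?thesis
  proof (cases "inverse_letters x y")
    case True
    then have "y = flip x" by (simp add: inverse_letters_iff_flip)
    with True Cons assms show ?thesis
      by (cases ys') (auto simp: push_letter_def reduced_Cons)
  next
    case False
    with Cons show ?thesis
      by (auto simp: push_letter_def inverse_letters_iff_flip flip_def)
  qed
qed

lemma reduced_normalize: "reduced (normalize w)"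
  by (induction w) (auto simp: normalize_def reduced_push_letter)

lemma normalize_Cons: "normalize (x # w) = push_letter x (normalize w)"
  by (simp add: normalize_def)

lemma normalize_reduced: "reduced w \<Longrightarrow> normalize w = w"
proof (induction w)
  case Nil
  then show ?case by (simp add: normalize_def)
next
  case (Cons x w)
  then show ?case
    by (cases w) (auto simp: normalize_Cons push_letter_def reduced_Cons)
qed

lemma reduced_foldr_push_letter: "reduced z \<Longrightarrow> reduced (foldr push_letter xs z)"
  by (induction xs) (auto simp: reduced_push_letter)

lemma foldr_push_letter_push_letter:
  assumes "reduced w" "reduced z"
  shows "foldr push_letter (push_letter x w) z = push_letter x (foldr push_letter w z)"
proof (cases w)
  case Nil
  then show ?thesis by (simp add: push_letter_def)
next
  case (Cons y w')
  show ?thesis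
  proof (cases "inverse_letters x y")
    case True
    then have "x = flip y"
      by (cases x; cases y) (auto simp: inverse_letters_def flip_def)
    moreover have "reduced (foldr push_letter w' z)"
      using assms by (intro reduced_foldr_push_letter)
    ultimately show ?thesis
      using Cons True push_letter_cancel by (simp add: push_letter_def)
  next
    case False
    with Cons show ?thesis by (simp add: push_letter_def)
  qed
qed

lemma foldr_push_letter_normalize:
  "reduced z \<Longrightarrow> foldr push_letter xs z = foldr push_letter (normalize xs) z"
  by (induction xs) (simp_all add: normalize_Cons foldr_push_letter_push_letter reduced_normalize,
      simp add: normalize_def)

lemma normalize_append: "normalize (xs @ ys) = foldr push_letter xs (normalize ys)"
  by (simp add: normalize_def)

lemma set_normalize: "set (normalize w) \<subseteq> set w"
proof -
  have "set (push_letter x ys) \<subseteq> insert x (set ys)" for x ys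
    by (cases ys) (auto simp: push_letter_def)
  then show ?thesis
    by (induction w) (fastforce simp: normalize_def)+
qed

lemma normalize_inverse_word: "reduced w \<Longrightarrow> foldr push_letter (rev (map flip w)) w = []"
proof (induction w)
  case Nil
  then show ?case by simp
next
  case (Cons a w)
  have "push_letter (flip a) (a # w) = w"
    by (simp add: push_letter_def inverse_letters_iff_flip flip_def)
  with Cons show ?case by (simp add: reduced_Cons)
qed

theorem free_grp_is_group: "group (free_grp n)"
proof (rule groupI)
  fix x y
  assume "x \<in> carrier (free_grp n)" "y \<in> carrier (free_grp n)"
  then show "x \<otimes>\<^bsub>free_grp n\<^esub> y \<in> carrier (free_grp n)"
    using set_normalize[of "x @ y"] by (auto simp: free_grp_def reduced_normalize)
next
  fix x y z
  have "normalize (normalize (x @ y) @ z) = foldr push_letter (normalize (x @ y)) (normalize z)"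
    by (rule normalize_append)
  also have "\<dots> = foldr push_letter (x @ y) (normalize z)"
    by (rule foldr_push_letter_normalize[symmetric]) (rule reduced_normalize)
  also have "\<dots> = normalize (x @ y @ z)"
    by (simp add: normalize_append)
  also have "\<dots> = normalize (x @ normalize (y @ z))"
    by (simp add: normalize_append normalize_reduced[OF reduced_foldr_push_letter[OF reduced_normalize]]
        del: foldr_append)
  finally show "x \<otimes>\<^bsub>free_grp n\<^esub> y \<otimes>\<^bsub>free_grp n\<^esub> z = x \<otimes>\<^bsub>free_grp n\<^esub> (y \<otimes>\<^bsub>free_grp n\<^esub> z)"
    by (simp add: free_grp_def)
next
  fix x
  assume x: "x \<in> carrier (free_grp n)"
  then show "\<one>\<^bsub>free_grp n\<^esub> \<otimes>\<^bsub>free_grp n\<^esub> x = x"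
    by (simp add: free_grp_def normalize_reduced)
  let ?y = "normalize (rev (map flip x))"
  have "?y \<in> carrier (free_grp n)"
    using x set_normalize[of "rev (map flip x)"]
    by (force simp: free_grp_def reduced_normalize flip_def)
  moreover have "?y \<otimes>\<^bsub>free_grp n\<^esub> x = \<one>\<^bsub>free_grp n\<^esub>"
    using x by (simp add: free_grp_def normalize_append foldr_push_letter_normalize[symmetric]
        normalize_reduced normalize_inverse_word)
  ultimately show "\<exists>y\<in>carrier (free_grp n). y \<otimes>\<^bsub>free_grp n\<^esub> x = \<one>\<^bsub>free_grp n\<^esub>"
    by blast
qed (simp add: free_grp_def)

lemma gen_in_carrier: "1 \<le> i \<Longrightarrow> i \<le> n - 1 \<Longrightarrow> gen i \<in> carrier (free_grp n)"
  by (simp add: free_grp_def gen_def reduced_Cons)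

section \<open>Commutator calculus\<close>

definition center :: "('a, 'b) monoid_scheme \<Rightarrow> 'a set" where
  "center G = {z \<in> carrier G. \<forall>g \<in> carrier G. z \<otimes>\<^bsub>G\<^esub> g = g \<otimes>\<^bsub>G\<^esub> z}"

context group
begin

text \<open>Conjugation x^g = g^-1 x g, matching the commutator convention [x,g] = x^-1 g^-1 x g.\<close>

definition conjg :: "'a \<Rightarrow> 'a \<Rightarrow> 'a" where
  "conjg g x = inv g \<otimes> x \<otimes> g"

lemma comm_closed [simp]: "x \<in> carrier G \<Longrightarrow> y \<in> carrier G \<Longrightarrow> comm G x y \<in> carrier G"
  by (simp add: comm_def)

lemma conjg_closed [simp]: "g \<in> carrier G \<Longrightarrow> x \<in> carrier G \<Longrightarrow> conjg g x \<in> carrier G"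
  by (simp add: conjg_def)

lemma inv_mult_cancel_left: "x \<in> carrier G \<Longrightarrow> y \<in> carrier G \<Longrightarrow> inv x \<otimes> (x \<otimes> y) = y"
  by (simp add: m_assoc[symmetric])

lemma mult_inv_cancel_left: "x \<in> carrier G \<Longrightarrow> y \<in> carrier G \<Longrightarrow> x \<otimes> (inv x \<otimes> y) = y"
  by (simp add: m_assoc[symmetric])

lemmas group_simps = m_assoc inv_mult_group inv_mult_cancel_left mult_inv_cancel_left

lemma conjg_mult:
  "g \<in> carrier G \<Longrightarrow> x \<in> carrier G \<Longrightarrow> y \<in> carrier G \<Longrightarrow> conjg g (x \<otimes> y) = conjg g x \<otimes> conjg g y"
  by (simp add: conjg_def group_simps)

lemma conjg_inv: "g \<in> carrier G \<Longrightarrow> x \<in> carrier G \<Longrightarrow> conjg g (inv x) = inv (conjg g x)"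
  by (simp add: conjg_def group_simps)

lemma conjg_pow: "g \<in> carrier G \<Longrightarrow> x \<in> carrier G \<Longrightarrow> conjg g (x [^] (k::nat)) = conjg g x [^] k"
  by (induction k) (simp_all add: conjg_mult, simp add: conjg_def)

lemma conjg_comm:
  "g \<in> carrier G \<Longrightarrow> x \<in> carrier G \<Longrightarrow> y \<in> carrier G \<Longrightarrow>
   conjg g (comm G x y) = comm G (conjg g x) (conjg g y)"
  by (simp add: comm_def conjg_mult conjg_inv)

lemma conjg_eq: "g \<in> carrier G \<Longrightarrow> x \<in> carrier G \<Longrightarrow> conjg g x = x \<otimes> comm G x g"
  by (simp add: comm_def conjg_def group_simps)

lemma comm_mult_right:
  "x \<in> carrier G \<Longrightarrow> y \<in> carrier G \<Longrightarrow> w \<in> carrier G \<Longrightarrow>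
   comm G x (y \<otimes> w) = comm G x w \<otimes> conjg w (comm G x y)"
  by (simp add: comm_def conjg_def group_simps)

lemma comm_mult_left:
  "x \<in> carrier G \<Longrightarrow> y \<in> carrier G \<Longrightarrow> w \<in> carrier G \<Longrightarrow>
   comm G (x \<otimes> y) w = conjg y (comm G x w) \<otimes> comm G y w"
  by (simp add: comm_def conjg_def group_simps)

lemma inv_comm: "x \<in> carrier G \<Longrightarrow> y \<in> carrier G \<Longrightarrow> inv (comm G x y) = comm G y x"
  by (simp add: comm_def group_simps)

lemma comm_eq_one_iff:
  assumes "x \<in> carrier G" "y \<in> carrier G"
  shows "comm G x y = \<one> \<longleftrightarrow> x \<otimes> y = y \<otimes> x"
proof -
  have "comm G x y = inv (y \<otimes> x) \<otimes> (x \<otimes> y)"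
    using assms by (simp add: comm_def group_simps)
  then show ?thesis
    using assms inv_solve_left'[of "\<one>" "y \<otimes> x" "x \<otimes> y"] by simp
qed

lemma conjg_eq_self_iff:
  assumes g: "g \<in> carrier G" and x: "x \<in> carrier G"
  shows "conjg g x = x \<longleftrightarrow> x \<otimes> g = g \<otimes> x"
proof -
  have "conjg g x = x \<longleftrightarrow> x \<otimes> comm G x g = x \<otimes> \<one>"
    using g x by (simp add: conjg_eq)
  also have "\<dots> \<longleftrightarrow> comm G x g = \<one>"
    using g x by (simp del: r_one)
  finally show ?thesis
    using g x by (simp add: comm_eq_one_iff)
qed

lemma center_carrier: "z \<in> center G \<Longrightarrow> z \<in> carrier G"
  by (simp add: center_def)

lemma center_commute: "z \<in> center G \<Longrightarrow> g \<in> carrier G \<Longrightarrow> z \<otimes> g = g \<otimes> z"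
  by (simp add: center_def)

lemma one_in_center: "\<one> \<in> center G"
  by (simp add: center_def)

lemma center_mult:
  assumes z: "z \<in> center G" and w: "w \<in> center G"
  shows "z \<otimes> w \<in> center G"
proof -
  have zc: "z \<in> carrier G" and wc: "w \<in> carrier G"
    using z w by (simp_all add: center_carrier)
  have "z \<otimes> w \<otimes> g = g \<otimes> (z \<otimes> w)" if g: "g \<in> carrier G" for g
  proof -
    have "z \<otimes> w \<otimes> g = z \<otimes> (g \<otimes> w)"
      using zc wc g center_commute[OF w g] by (simp add: m_assoc)
    also have "\<dots> = g \<otimes> (z \<otimes> w)"
      using zc wc g center_commute[OF z g] by (simp add: m_assoc[symmetric])
    finally show ?thesis .
  qed
  with zc wc show ?thesis by (simp add: center_def)
qed

lemma center_inv:
  assumes z: "z \<in> center G"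
  shows "inv z \<in> center G"
proof -
  have zc: "z \<in> carrier G" using z by (rule center_carrier)
  have "inv z \<otimes> g = g \<otimes> inv z" if g: "g \<in> carrier G" for g
  proof -
    have "inv z \<otimes> g = inv z \<otimes> (g \<otimes> z) \<otimes> inv z"
      using g zc by (simp add: m_assoc)
    also have "\<dots> = g \<otimes> inv z"
      using g zc by (simp add: center_commute[OF z g, symmetric] m_assoc[symmetric])
    finally show ?thesis .
  qed
  with zc show ?thesis by (simp add: center_def)
qed

lemma center_pow: "z \<in> center G \<Longrightarrow> z [^] (k::nat) \<in> center G"
  by (induction k) (simp_all add: one_in_center center_mult)

lemma conjg_center: "z \<in> center G \<Longrightarrow> g \<in> carrier G \<Longrightarrow> conjg g z = z"
  by (simp add: conjg_eq_self_iff center_carrier center_commute)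

lemma conjg_by_center: "z \<in> center G \<Longrightarrow> x \<in> carrier G \<Longrightarrow> conjg z x = x"
  by (simp add: conjg_eq_self_iff center_carrier center_commute)

lemma comm_center_left: "z \<in> center G \<Longrightarrow> y \<in> carrier G \<Longrightarrow> comm G z y = \<one>"
  by (simp add: comm_eq_one_iff center_carrier center_commute)

lemma comm_center_right: "z \<in> center G \<Longrightarrow> x \<in> carrier G \<Longrightarrow> comm G x z = \<one>"
  by (simp add: comm_eq_one_iff center_carrier center_commute)

lemma comm_mult_center_left:
  "z \<in> center G \<Longrightarrow> x \<in> carrier G \<Longrightarrow> y \<in> carrier G \<Longrightarrow> comm G (x \<otimes> z) y = comm G x y"
  by (simp add: comm_mult_left conjg_by_center comm_center_left center_carrier)

lemma comm_mult_center_right: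
  "z \<in> center G \<Longrightarrow> x \<in> carrier G \<Longrightarrow> y \<in> carrier G \<Longrightarrow> comm G x (y \<otimes> z) = comm G x y"
  by (simp add: comm_mult_right conjg_by_center comm_center_right center_carrier)

lemma center_pow_mult:
  assumes z: "z \<in> center G" and w: "w \<in> carrier G"
  shows "(w \<otimes> z) [^] (k::nat) = w [^] k \<otimes> z [^] k"
proof (induction k)
  case (Suc k)
  have zc: "z \<in> carrier G" using z by (rule center_carrier)
  have "(w \<otimes> z) [^] Suc k = w [^] k \<otimes> (z [^] k \<otimes> w) \<otimes> z"
    using Suc w zc by (simp add: m_assoc)
  also have "z [^] k \<otimes> w = w \<otimes> z [^] k"
    using center_commute[OF center_pow[OF z] w] .
  finally show ?case using w zc by (simp add: m_assoc)
qed simp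

lemma comm_inv_right_center:
  assumes x: "x \<in> carrier G" and g: "g \<in> carrier G" and c: "comm G x g \<in> center G"
  shows "comm G x (inv g) = inv (comm G x g)"
proof -
  have "\<one> = comm G x (inv g \<otimes> g)"
    using x g by (simp add: comm_def)
  also have "\<dots> = comm G x g \<otimes> conjg g (comm G x (inv g))"
    using x g by (intro comm_mult_right) simp_all
  finally have "conjg g (comm G x (inv g)) = inv (comm G x g) \<otimes> \<one>"
    by (intro inv_solve_left[THEN iffD2]) (use x g in simp_all)
  then have "conjg (inv g) (conjg g (comm G x (inv g))) = inv (comm G x g)"
    using x g conjg_center[OF center_inv[OF c]] by simp
  then show ?thesis
    using x g by (simp add: conjg_def group_simps)
qed

lemma comm_pow_left_expand:
  assumes a: "a \<in> carrier G" and b: "b \<in> carrier G"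
    and central: "comm G (comm G a b) a \<in> center G"
  shows "comm G (a [^] (k::nat)) b = comm G a b [^] k \<otimes> comm G (comm G a b) a [^] (k choose 2)"
proof (induction k)
  case 0
  then show ?case using a b by (simp add: comm_def numeral_2_eq_2)
next
  case (Suc k)
  define d where "d = comm G a b"
  define z where "z = comm G d a"
  have dc: "d \<in> carrier G" using a b by (simp add: d_def)
  have z: "z \<in> center G" using central by (simp add: z_def d_def)
  then have zc: "z \<in> carrier G" by (rule center_carrier)
  have ad: "conjg a d = d \<otimes> z"
    using a dc by (simp add: conjg_eq z_def)
  have "comm G (a [^] Suc k) b = conjg a (comm G (a [^] k) b) \<otimes> d"
    using a b by (simp add: comm_mult_left d_def)
  also have "\<dots> = (d \<otimes> z) [^] k \<otimes> z [^] (k choose 2) \<otimes> d"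
    using Suc.IH[folded d_def z_def] a dc zc ad conjg_center[OF center_pow[OF z] a]
    by (simp add: conjg_mult conjg_pow)
  also have "\<dots> = d [^] k \<otimes> d \<otimes> (z [^] k \<otimes> z [^] (k choose 2))"
    using dc zc center_commute[OF center_mult[OF center_pow[OF z] center_pow[OF z]] dc, of k "k choose 2"]
    by (simp add: center_pow_mult[OF z] m_assoc)
  also have "\<dots> = d [^] Suc k \<otimes> z [^] (Suc k choose 2)"
    using dc zc by (simp add: nat_pow_mult numeral_2_eq_2)
  finally show ?case by (simp add: d_def z_def)
qed

lemma comm_pow_right_expand:
  assumes a: "a \<in> carrier G" and b: "b \<in> carrier G"
    and central: "comm G (comm G a b) b \<in> center G"
  shows "comm G a (b [^] (k::nat)) = comm G a b [^] k \<otimes> comm G (comm G a b) b [^] (k choose 2)"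
proof (induction k)
  case 0
  then show ?case using a b by (simp add: comm_def numeral_2_eq_2)
next
  case (Suc k)
  define d where "d = comm G a b"
  define z where "z = comm G d b"
  have dc: "d \<in> carrier G" using a b by (simp add: d_def)
  have z: "z \<in> center G" using central by (simp add: z_def d_def)
  then have zc: "z \<in> carrier G" by (rule center_carrier)
  have bd: "conjg b d = d \<otimes> z"
    using b dc by (simp add: conjg_eq z_def)
  have "comm G a (b [^] Suc k) = d \<otimes> conjg b (comm G a (b [^] k))"
    using a b by (simp add: comm_mult_right d_def)
  also have "\<dots> = d \<otimes> ((d \<otimes> z) [^] k \<otimes> z [^] (k choose 2))"
    using Suc.IH[folded d_def z_def] b dc zc bd conjg_center[OF center_pow[OF z] b]
    by (simp add: conjg_mult conjg_pow)
  also have "\<dots> = (d \<otimes> d [^] k) \<otimes> (z [^] k \<otimes> z [^] (k choose 2))"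
    using dc zc by (simp add: center_pow_mult[OF z] m_assoc)
  also have "\<dots> = d [^] Suc k \<otimes> z [^] (Suc k choose 2)"
    using dc zc by (simp add: nat_pow_mult numeral_2_eq_2 nat_pow_Suc2[symmetric] del: nat_pow_Suc)
  finally show ?case by (simp add: d_def z_def)
qed

text \<open>If [x,y] is central, then [x,y]^m = [x^m, y] = [x, y^m]; so [x,y]^m = 1 as soon as
  x^m or y^m is central.\<close>

lemma comm_pow_eq_one_left:
  assumes x: "x \<in> carrier G" and y: "y \<in> carrier G"
    and "comm G x y \<in> center G" and "x [^] (m::nat) \<in> center G"
  shows "comm G x y [^] m = \<one>"
proof -
  have "comm G (comm G x y) x = \<one>"
    using assms by (simp add: comm_center_left)
  then have "comm G (x [^] m) y = comm G x y [^] m"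
    using comm_pow_left_expand[OF x y, of m] x y by (simp add: one_in_center)
  with assms show ?thesis by (simp add: comm_center_left)
qed

lemma comm_pow_eq_one_right:
  assumes x: "x \<in> carrier G" and y: "y \<in> carrier G"
    and "comm G x y \<in> center G" and "y [^] (m::nat) \<in> center G"
  shows "comm G x y [^] m = \<one>"
proof -
  have "comm G (comm G x y) y = \<one>"
    using assms by (simp add: comm_center_left)
  then have "comm G x (y [^] m) = comm G x y [^] m"
    using comm_pow_right_expand[OF x y, of m] x y by (simp add: one_in_center)
  with assms show ?thesis by (simp add: comm_center_right)
qed

text \<open>If [[a,b],b] and b^m are central, then so is [a,b]^m = [[a,b],b]^-(m choose 2).\<close>

lemma comm_pow_in_center:
  assumes a: "a \<in> carrier G" and b: "b \<in> carrier G"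
    and central: "comm G (comm G a b) b \<in> center G" and pow: "b [^] (m::nat) \<in> center G"
  shows "comm G a b [^] m \<in> center G"
proof -
  let ?z = "comm G (comm G a b) b [^] (m choose 2)"
  have "comm G a b [^] m \<otimes> ?z = \<one>"
    using comm_pow_right_expand[OF a b central, of m] comm_center_right[OF pow a] by simp
  then have "comm G a b [^] m = inv ?z"
    using a b by (simp add: inv_equality[symmetric])
  then show ?thesis
    using center_inv[OF center_pow[OF central]] by simp
qed

lemma comm_comm_mult_inv_pow:
  assumes a: "a \<in> carrier G" and b: "b \<in> carrier G"
    and ca: "comm G (comm G a b) a \<in> center G" and cb: "comm G (comm G a b) b \<in> center G"
    and am: "a [^] (m::nat) \<in> center G" and bm: "b [^] m \<in> center G"
  shows "comm G (comm G a b) (a \<otimes> inv b) [^] m = \<one>"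
    and "comm G (comm G a b) (a \<otimes> inv b) [^] (m choose 2) = \<one>"
proof -
  define d where "d = comm G a b"
  define za where "za = comm G d a"
  define zb where "zb = comm G d b"
  have dc: "d \<in> carrier G" using a b by (simp add: d_def)
  have za: "za \<in> center G" and zb: "zb \<in> center G"
    using ca cb by (simp_all add: za_def zb_def d_def)
  then have zac: "za \<in> carrier G" and zbc: "zb \<in> carrier G" by (simp_all add: center_carrier)
  have "comm G d (a \<otimes> inv b) = comm G d (inv b) \<otimes> conjg (inv b) za"
    using a b dc by (simp add: comm_mult_right za_def)
  also have "\<dots> = inv zb \<otimes> za"
    using b dc zb za by (simp add: comm_inv_right_center conjg_center zb_def)
  finally have e: "comm G d (a \<otimes> inv b) [^] k = inv (zb [^] k) \<otimes> za [^] k" for k :: nat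
    using za zbc by (simp add: center_pow_mult nat_pow_inv)
  have "za [^] m = \<one>"
    using comm_pow_eq_one_right[OF dc a _ am] za by (simp add: za_def)
  moreover have "zb [^] m = \<one>"
    using comm_pow_eq_one_right[OF dc b _ bm] zb by (simp add: zb_def)
  ultimately show "comm G (comm G a b) (a \<otimes> inv b) [^] m = \<one>"
    using e[of m] by (simp add: d_def)
  \<comment> \<open>Both [a^m, b] and [a, b^m] are trivial, and they equal d^m za^(m choose 2)
    and d^m zb^(m choose 2) respectively.\<close>
  have "d [^] m \<otimes> za [^] (m choose 2) = d [^] m \<otimes> zb [^] (m choose 2)"
    using comm_pow_left_expand[OF a b ca, of m] comm_pow_right_expand[OF a b cb, of m]
      comm_center_left[OF am b] comm_center_right[OF bm a]
    by (simp add: d_def za_def zb_def)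
  then have "za [^] (m choose 2) = zb [^] (m choose 2)"
    using dc zac zbc by simp
  then show "comm G (comm G a b) (a \<otimes> inv b) [^] (m choose 2) = \<one>"
    using e[of "m choose 2"] zbc by (simp add: d_def)
qed

text \<open>If [d,x] and [d,y] are central, then d commutes with [x,y]: conjugating d successively
  by x^-1, y^-1, x, y multiplies it by central factors that cancel.\<close>

lemma comm_comm_eq_one:
  assumes d: "d \<in> carrier G" and x: "x \<in> carrier G" and y: "y \<in> carrier G"
    and zx: "comm G d x \<in> center G" and zy: "comm G d y \<in> center G"
  shows "comm G d (comm G x y) = \<one>"
proof -
  define s where "s = comm G d x"
  define t where "t = comm G d y"
  have sc: "s \<in> carrier G" and tc: "t \<in> carrier G"
    using d x y by (simp_all add: s_def t_def)
  have s: "s \<in> center G" and t: "t \<in> center G"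
    using zx zy by (simp_all add: s_def t_def)
  have "conjg (comm G x y) d = conjg y (conjg x (conjg (inv y) (conjg (inv x) d)))"
    using d x y by (simp add: comm_def conjg_def group_simps)
  also have "\<dots> = d \<otimes> t \<otimes> s \<otimes> inv t \<otimes> inv s"
  proof -
    have "conjg x d = d \<otimes> s" "conjg y d = d \<otimes> t"
      using d x y by (simp_all add: conjg_eq s_def t_def)
    moreover have "conjg (inv x) d = d \<otimes> inv s" "conjg (inv y) d = d \<otimes> inv t"
      using d x y zx zy by (simp_all add: conjg_eq comm_inv_right_center s_def t_def)
    ultimately show ?thesis
      using d x y sc tc conjg_center[OF s] conjg_center[OF t]
        conjg_center[OF center_inv[OF s]] conjg_center[OF center_inv[OF t]]
      by (simp add: conjg_mult)
  qed
  also have "\<dots> = d \<otimes> (t \<otimes> (s \<otimes> (inv s \<otimes> inv t)))"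
    using d sc tc center_commute[OF center_inv[OF t], of "inv s"]
    by (simp add: m_assoc)
  also have "\<dots> = d"
    using d sc tc by (simp add: mult_inv_cancel_left)
  finally show ?thesis
    using d x y by (simp add: conjg_eq_self_iff comm_eq_one_iff)
qed

text \<open>In the next three lemmas d = [a,b], u = [b,c], v = [a,u] and f = [d,u]; the hypotheses
  are those that the relators of UT_n impose, modulo the centre, on three consecutive
  generators a, b, c.\<close>

lemma comm_comm_right_shift:
  assumes a: "a \<in> carrier G" and b: "b \<in> carrier G" and c: "c \<in> carrier G"
    and da: "comm G (comm G a b) a \<in> center G"
    and ub: "comm G (comm G b c) b \<in> center G"
    and du: "comm G (comm G a b) (comm G b c) \<in> center G"
  shows "comm G (comm G a (comm G b c)) b = comm G (comm G a b) (comm G b c)"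
proof -
  define d where "d = comm G a b"
  define u where "u = comm G b c"
  define v where "v = comm G a u"
  have dc: "d \<in> carrier G" and uc: "u \<in> carrier G" and vc: "v \<in> carrier G"
    using a b c by (simp_all add: d_def u_def v_def)
  have bu: "comm G b u \<in> center G"
    using center_inv[OF ub] b uc by (simp add: inv_comm u_def)
  have dv: "conjg v d = d"
    using comm_comm_eq_one[OF dc a uc] da du dc vc
    by (simp add: conjg_eq d_def u_def v_def)
  have "d \<otimes> comm G d u = conjg u d"
    using dc uc by (simp add: conjg_eq)
  also have "\<dots> = comm G (a \<otimes> v) (b \<otimes> comm G b u)"
    using a b uc conjg_comm[OF uc a b] conjg_eq[OF uc a] conjg_eq[OF uc b] by (simp add: d_def v_def)
  also have "\<dots> = d \<otimes> comm G v b"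
    using a b vc bu dv by (simp add: comm_mult_center_right comm_mult_left d_def)
  finally show ?thesis
    using dc uc vc b by (simp add: d_def u_def v_def)
qed

lemma comm_comm_left_split:
  assumes a: "a \<in> carrier G" and b: "b \<in> carrier G" and c: "c \<in> carrier G"
    and ac: "comm G a c \<in> center G"
    and da: "comm G (comm G a b) a \<in> center G"
    and du: "comm G (comm G a b) (comm G b c) \<in> center G"
  shows "comm G (comm G a b) c = comm G a (comm G b c) \<otimes> comm G (comm G a b) (comm G b c)"
proof -
  define d where "d = comm G a b"
  define u where "u = comm G b c"
  define v where "v = comm G a u"
  define f where "f = comm G d u"
  have dc: "d \<in> carrier G" and uc: "u \<in> carrier G" and vc: "v \<in> carrier G"
    and fc: "f \<in> carrier G"
    using a b c by (simp_all add: d_def u_def v_def f_def)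
  have dv: "d \<otimes> v = v \<otimes> d"
    using comm_comm_eq_one[OF dc a uc] da du dc vc
    by (simp add: comm_eq_one_iff d_def u_def v_def)
  have "d \<otimes> comm G d c = conjg c d"
    using dc c by (simp add: conjg_eq)
  also have "\<dots> = comm G (a \<otimes> comm G a c) (b \<otimes> u)"
    using conjg_comm[OF c a b] conjg_eq[OF c a] conjg_eq[OF c b] by (simp add: d_def u_def)
  also have "\<dots> = v \<otimes> (d \<otimes> f)"
    using a b c uc dc ac conjg_eq[OF uc dc]
    by (simp add: comm_mult_center_left comm_mult_right d_def[symmetric] v_def f_def)
  also have "\<dots> = d \<otimes> (v \<otimes> f)"
    using dc vc fc dv by (simp add: m_assoc[symmetric])
  finally show ?thesis
    using dc vc fc c by (simp add: d_def u_def v_def f_def)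
qed

text \<open>Third: f^2 = 1.  Conjugating the central element [d,b] by c and expanding with the
  two previous identities gives [d,b] = [d,b] f^2.\<close>

lemma comm_comm_square:
  assumes a: "a \<in> carrier G" and b: "b \<in> carrier G" and c: "c \<in> carrier G"
    and ac: "comm G a c \<in> center G"
    and da: "comm G (comm G a b) a \<in> center G"
    and db: "comm G (comm G a b) b \<in> center G"
    and ub: "comm G (comm G b c) b \<in> center G"
    and uc: "comm G (comm G b c) c \<in> center G"
    and du: "comm G (comm G a b) (comm G b c) \<in> center G"
  shows "comm G (comm G a b) (comm G b c) [^] (2::nat) = \<one>"
proof -
  define d where "d = comm G a b"
  define u where "u = comm G b c"
  define w where "w = comm G d c"
  define f where "f = comm G d u"
  define z where "z = comm G d b"
  have C: "d \<in> carrier G" "u \<in> carrier G" "w \<in> carrier G" "f \<in> carrier G" "z \<in> carrier G"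
    using a b c by (simp_all add: d_def u_def w_def f_def z_def)
  have f: "f \<in> center G" and z: "z \<in> center G"
    using du db by (simp_all add: f_def z_def d_def u_def)
  have w_eq: "w = comm G a u \<otimes> f"
    using comm_comm_left_split[OF a b c ac da du] by (simp add: w_def f_def d_def u_def)
  have wb: "comm G w b = f"
    using comm_comm_right_shift[OF a b c da ub du] w_eq f a b C
    by (simp add: comm_mult_center_left f_def d_def u_def)
  have "comm G u d \<in> center G"
    using center_inv[OF f] C by (simp add: inv_comm f_def)
  then have "comm G u w = \<one>"
    using comm_comm_eq_one[OF C(2) C(1) c] uc by (simp add: w_def u_def)
  then have wu: "comm G w u = \<one>"
    using C inv_comm[of u w] by simp
  have "z = conjg c z"
    using z c by (simp add: conjg_center)
  also have "\<dots> = comm G (d \<otimes> w) (b \<otimes> u)"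
    using conjg_comm[OF c C(1) b] conjg_eq[OF c C(1)] conjg_eq[OF c b]
    by (simp add: z_def w_def u_def)
  also have "\<dots> = f \<otimes> (z \<otimes> f)"
    using b C f z wu wb
    by (simp add: comm_mult_right comm_mult_left conjg_center center_mult
        f_def[symmetric] z_def[symmetric])
  also have "\<dots> = z \<otimes> (f \<otimes> f)"
    using C center_commute[OF f, of z] by (simp add: m_assoc[symmetric])
  finally have "f \<otimes> f = \<one>"
    using C by simp
  then show ?thesis
    using C by (simp add: numeral_2_eq_2 f_def d_def u_def)
qed

lemma normal_closure_normal:
  assumes S: "S \<subseteq> carrier G"
  shows "normal_closure G S \<lhd> G"
  unfolding normal_closure_def
proof (rule normal_generateI)
  show "{g \<otimes> r \<otimes> inv g |g r. g \<in> carrier G \<and> r \<in> S} \<subseteq> carrier G"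
    using S by auto
next
  fix k g
  assume "k \<in> {g \<otimes> r \<otimes> inv g |g r. g \<in> carrier G \<and> r \<in> S}" and g: "g \<in> carrier G"
  then obtain g' r where k: "k = g' \<otimes> r \<otimes> inv g'" and g': "g' \<in> carrier G" and r: "r \<in> S"
    by blast
  have "g \<otimes> k \<otimes> inv g = (g \<otimes> g') \<otimes> r \<otimes> inv (g \<otimes> g')"
    using k g g' r S by (auto simp: m_assoc inv_mult_group)
  with g g' r show "g \<otimes> k \<otimes> inv g \<in> {g \<otimes> r \<otimes> inv g |g r. g \<in> carrier G \<and> r \<in> S}"
    by blast
qed

lemma normal_closure_incl:
  assumes S: "S \<subseteq> carrier G" and r: "r \<in> S"
  shows "r \<in> normal_closure G S"
  unfolding normal_closure_def
proof (rule generate.incl)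
  have "r = \<one> \<otimes> r \<otimes> inv \<one>"
    using S r by auto
  with r show "r \<in> {g \<otimes> r \<otimes> inv g |g r. g \<in> carrier G \<and> r \<in> S}"
    by blast
qed

text \<open>[N,G] is normal whenever N is, since conjugation permutes the generating commutators.\<close>

lemma comm_subgroup_normal:
  assumes N: "N \<lhd> G"
  shows "comm_subgroup G N (carrier G) \<lhd> G"
  unfolding comm_subgroup_def
proof (rule normal_generateI)
  have Nc: "N \<subseteq> carrier G"
    using N normal_imp_subgroup subgroup.subset by blast
  then show "{comm G a b |a b. a \<in> N \<and> b \<in> carrier G} \<subseteq> carrier G"
    by auto
  fix k g
  assume "k \<in> {comm G a b |a b. a \<in> N \<and> b \<in> carrier G}" and g: "g \<in> carrier G"
  then obtain a b where k: "k = comm G a b" and a: "a \<in> N" and b: "b \<in> carrier G"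
    by blast
  have "conjg (inv g) k = comm G (conjg (inv g) a) (conjg (inv g) b)"
    using k a b g Nc by (auto simp: conjg_comm)
  then have "g \<otimes> k \<otimes> inv g = comm G (g \<otimes> a \<otimes> inv g) (g \<otimes> b \<otimes> inv g)"
    using g by (simp add: conjg_def)
  then show "g \<otimes> k \<otimes> inv g \<in> {comm G a b |a b. a \<in> N \<and> b \<in> carrier G}"
    using normal.inv_op_closed2[OF N g a] g b by blast
qed

lemma comm_subgroup_incl: "a \<in> A \<Longrightarrow> b \<in> B \<Longrightarrow> comm G a b \<in> comm_subgroup G A B"
  unfolding comm_subgroup_def by (rule generate.incl) blast

lemma center_Mod_comm_subgroup:
  assumes N: "N \<lhd> G" and r: "r \<in> N"
  defines "K \<equiv> comm_subgroup G N (carrier G)"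
  shows "K #> r \<in> center (G Mod K)"
proof -
  have K: "K \<lhd> G"
    unfolding K_def using N by (rule comm_subgroup_normal)
  interpret Q: group_hom G "G Mod K" "\<lambda>x. K #> x"
    using K by (simp add: group_hom_def group_hom_axioms_def is_group
        normal.factorgroup_is_group normal.r_coset_hom_Mod)
  have rc: "r \<in> carrier G"
    using N r normal_imp_subgroup subgroup.subset by blast
  have "(K #> r) \<otimes>\<^bsub>G Mod K\<^esub> (K #> x) = (K #> x) \<otimes>\<^bsub>G Mod K\<^esub> (K #> r)"
    if x: "x \<in> carrier G" for x
  proof -
    have "comm G r x \<in> K"
      using r x by (simp add: K_def comm_subgroup_incl)
    then have "K #> comm G r x = \<one>\<^bsub>G Mod K\<^esub>"
      using K rc x by (simp add: coset_join2 normal_imp_subgroup)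
    then have "comm (G Mod K) (K #> r) (K #> x) = \<one>\<^bsub>G Mod K\<^esub>"
      using rc x by (simp add: comm_def)
    moreover have "K #> r \<in> carrier (G Mod K)" "K #> x \<in> carrier (G Mod K)"
      using rc x by simp_all
    ultimately show ?thesis
      using Q.H.comm_eq_one_iff by blast
  qed
  then show ?thesis
    using rc by (auto simp: center_def carrier_FactGroup)
qed

end

section \<open>Groups in which the relators of UT_n are central\<close>

text \<open>A homomorphism from the free group that sends every relator of UT_n(Z/mZ) into the
  centre; the projection F \<rightarrow> F/[R,F] is the example of interest.\<close>

locale UT_central_image = group_hom "free_grp n" H h
  for n m :: nat and H :: "('c, 'd) monoid_scheme" and h :: "letter list \<Rightarrow> 'c" +
  assumes relators_central: "r \<in> UT_relators n m \<Longrightarrow> h r \<in> center H"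
begin

lemma image_comm:
  "x \<in> carrier (free_grp n) \<Longrightarrow> y \<in> carrier (free_grp n) \<Longrightarrow>
   h (comm (free_grp n) x y) = comm H (h x) (h y)"
  by (simp add: comm_def)

lemma image_gen_in_carrier: "1 \<le> i \<Longrightarrow> i \<le> n - 1 \<Longrightarrow> h (gen i) \<in> carrier H"
  by (simp add: gen_in_carrier)

lemma image_gen_pow_central:
  assumes "1 \<le> i" "i \<le> n - 1"
  shows "h (gen i) [^]\<^bsub>H\<^esub> m \<in> center H"
proof -
  have "gen i [^]\<^bsub>free_grp n\<^esub> m \<in> UT_relators n m"
    using assms by (auto simp: UT_relators_def)
  with assms show ?thesis
    using relators_central hom_nat_pow[OF gen_in_carrier] by metis
qed

lemma image_far_comm_central:
  assumes "1 \<le> i" "i < j - 1" "j - 1 \<le> n - 2"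
  shows "comm H (h (gen i)) (h (gen j)) \<in> center H"
proof -
  have "h (comm (free_grp n) (gen i) (gen j)) \<in> center H"
    using assms by (intro relators_central, unfold UT_relators_def) blast
  moreover have "gen i \<in> carrier (free_grp n)" "gen j \<in> carrier (free_grp n)"
    using assms by (simp_all add: gen_in_carrier)
  ultimately show ?thesis
    by (simp add: image_comm)
qed

lemma image_comm_comm_central:
  assumes "1 \<le> i" "i \<le> n - 2"
  shows "comm H (comm H (h (gen i)) (h (gen (i+1)))) (h (gen i)) \<in> center H"
    and "comm H (comm H (h (gen i)) (h (gen (i+1)))) (h (gen (i+1))) \<in> center H"
proof -
  have "h (comm (free_grp n) (comm (free_grp n) (gen i) (gen (i+1))) (gen i)) \<in> center H"
    and "h (comm (free_grp n) (comm (free_grp n) (gen i) (gen (i+1))) (gen (i+1))) \<in> center H"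
    using assms by (intro relators_central, unfold UT_relators_def, blast)+
  moreover have "gen i \<in> carrier (free_grp n)" "gen (i+1) \<in> carrier (free_grp n)"
    using assms by (simp_all add: gen_in_carrier)
  ultimately show "comm H (comm H (h (gen i)) (h (gen (i+1)))) (h (gen i)) \<in> center H"
    and "comm H (comm H (h (gen i)) (h (gen (i+1)))) (h (gen (i+1))) \<in> center H"
    by (simp_all add: image_comm)
qed

lemma image_comm_comm_adjacent_central:
  assumes "1 \<le> i" "i \<le> n - 3"
  shows "comm H (comm H (h (gen i)) (h (gen (i+1)))) (comm H (h (gen (i+1))) (h (gen (i+2))))
         \<in> center H"
proof -
  have "h (comm (free_grp n) (comm (free_grp n) (gen i) (gen (i+1)))
          (comm (free_grp n) (gen (i+1)) (gen (i+2)))) \<in> center H"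
    using assms by (intro relators_central, unfold UT_relators_def) blast
  moreover have "gen i \<in> carrier (free_grp n)" "gen (i+1) \<in> carrier (free_grp n)"
    "gen (i+2) \<in> carrier (free_grp n)"
    using assms by (simp_all add: gen_in_carrier)
  ultimately show ?thesis
    by (simp add: image_comm)
qed

lemma order_far_comm:
  assumes "1 \<le> i" "i < j - 1" "j - 1 \<le> n - 2"
  shows "H.ord (h (comm (free_grp n) (gen i) (gen j))) dvd m"
proof -
  have a: "h (gen i) \<in> carrier H" and b: "h (gen j) \<in> carrier H"
    using assms by (simp_all add: image_gen_in_carrier)
  have "comm H (h (gen i)) (h (gen j)) [^]\<^bsub>H\<^esub> m = \<one>\<^bsub>H\<^esub>"
    using assms by (intro H.comm_pow_eq_one_left[OF a b] image_far_comm_central image_gen_pow_central) simp_all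
  with assms a b show ?thesis
    by (simp add: image_comm gen_in_carrier H.pow_eq_id)
qed

lemma order_comm_comm_gen:
  assumes "1 \<le> i" "i \<le> n - 2"
  shows "H.ord (h (comm (free_grp n) (comm (free_grp n) (gen i) (gen (i+1))) (gen i))) dvd m"
proof -
  have a: "h (gen i) \<in> carrier H" and b: "h (gen (i+1)) \<in> carrier H"
    using assms by (simp_all add: image_gen_in_carrier)
  have "comm H (comm H (h (gen i)) (h (gen (i+1)))) (h (gen i)) [^]\<^bsub>H\<^esub> m = \<one>\<^bsub>H\<^esub>"
    using assms image_comm_comm_central(1) image_gen_pow_central a b
    by (intro H.comm_pow_eq_one_right) simp_all
  with assms a b show ?thesis
    by (simp add: image_comm gen_in_carrier H.pow_eq_id)
qed

lemma order_comm_comm_mult_inv: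
  assumes "1 \<le> i" "i \<le> n - 2"
  shows "H.ord (h (comm (free_grp n) (comm (free_grp n) (gen i) (gen (i+1)))
                   (gen i \<otimes>\<^bsub>free_grp n\<^esub> inv\<^bsub>free_grp n\<^esub> gen (i+1)))) dvd gcd m (m choose 2)"
proof -
  have a: "h (gen i) \<in> carrier H" and b: "h (gen (i+1)) \<in> carrier H"
    using assms by (simp_all add: image_gen_in_carrier)
  have am: "h (gen i) [^]\<^bsub>H\<^esub> m \<in> center H" and bm: "h (gen (i+1)) [^]\<^bsub>H\<^esub> m \<in> center H"
    using assms by (simp_all add: image_gen_pow_central)
  note pow = H.comm_comm_mult_inv_pow[OF a b image_comm_comm_central[OF assms] am bm]
  show ?thesis
    using assms a b pow
    by (simp add: image_comm gen_in_carrier H.pow_eq_id gcd_greatest)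
qed

lemma order_comm_comm_adjacent:
  assumes "1 \<le> i" "i \<le> n - 3"
  shows "H.ord (h (comm (free_grp n) (comm (free_grp n) (gen i) (gen (i+1)))
                   (comm (free_grp n) (gen (i+1)) (gen (i+2))))) dvd gcd 2 m"
proof -
  have a: "h (gen i) \<in> carrier H" and b: "h (gen (i+1)) \<in> carrier H"
    and c: "h (gen (i+2)) \<in> carrier H"
    using assms by (simp_all add: image_gen_in_carrier)
  have ac: "comm H (h (gen i)) (h (gen (i+2))) \<in> center H"
    using assms by (intro image_far_comm_central) simp_all
  note ab = image_comm_comm_central[of i] and bc = image_comm_comm_central[of "i+1"]
  have bc': "comm H (comm H (h (gen (i+1))) (h (gen (i+2)))) (h (gen (i+1))) \<in> center H"
    "comm H (comm H (h (gen (i+1))) (h (gen (i+2)))) (h (gen (i+2))) \<in> center H"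
    using assms bc by (simp_all add: numeral_2_eq_2)
  have du: "comm H (comm H (h (gen i)) (h (gen (i+1)))) (comm H (h (gen (i+1))) (h (gen (i+2))))
            \<in> center H"
    using assms by (rule image_comm_comm_adjacent_central)
  have square: "comm H (comm H (h (gen i)) (h (gen (i+1)))) (comm H (h (gen (i+1))) (h (gen (i+2))))
                [^]\<^bsub>H\<^esub> (2::nat) = \<one>\<^bsub>H\<^esub>"
    using assms by (intro H.comm_comm_square[OF a b c ac _ _ bc' du] ab) simp_all
  have "comm H (h (gen (i+1))) (h (gen (i+2))) [^]\<^bsub>H\<^esub> m \<in> center H"
    using assms by (intro H.comm_pow_in_center[OF b c bc'(2)] image_gen_pow_central) simp_all
  then have "comm H (comm H (h (gen i)) (h (gen (i+1)))) (comm H (h (gen (i+1))) (h (gen (i+2))))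
             [^]\<^bsub>H\<^esub> m = \<one>\<^bsub>H\<^esub>"
    using a b c du by (intro H.comm_pow_eq_one_right) simp_all
  with square assms a b c show ?thesis
    by (simp add: image_comm gen_in_carrier H.pow_eq_id gcd_greatest)
qed

end

section \<open>The quotient F/[R,F]\<close>

lemma UT_relators_in_carrier: "UT_relators n m \<subseteq> carrier (free_grp n)"
proof -
  interpret F: group "free_grp n" by (rule free_grp_is_group)
  show ?thesis
    unfolding UT_relators_def by (auto intro!: F.comm_closed F.nat_pow_closed gen_in_carrier)
qed

lemma projection_is_UT_central_image: "UT_central_image n m (Q n m) (proj n m)"
proof -
  interpret F: group "free_grp n" by (rule free_grp_is_group)
  have R: "UT_R n m \<lhd> free_grp n"
    unfolding UT_R_def by (rule F.normal_closure_normal[OF UT_relators_in_carrier])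
  have proj: "proj n m = (\<lambda>x. RF n m #>\<^bsub>free_grp n\<^esub> x)"
    by (simp add: proj_def fun_eq_iff)
  have RF: "RF n m \<lhd> free_grp n"
    unfolding RF_def using R by (rule F.comm_subgroup_normal)
  show ?thesis
  proof (intro UT_central_image.intro group_hom.intro group_hom_axioms.intro UT_central_image_axioms.intro)
    show "group (free_grp n)"
      by (rule free_grp_is_group)
    show "group (Q n m)"
      unfolding Q_def using RF by (rule normal.factorgroup_is_group)
    show "proj n m \<in> hom (free_grp n) (Q n m)"
      unfolding Q_def proj using RF by (rule normal.r_coset_hom_Mod)
    fix r
    assume "r \<in> UT_relators n m"
    then have "r \<in> UT_R n m"
      unfolding UT_R_def by (rule F.normal_closure_incl[OF UT_relators_in_carrier])
    then show "proj n m r \<in> center (Q n m)"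
      unfolding Q_def proj_def RF_def by (rule F.center_Mod_comm_subgroup[OF R])
  qed
qed

text \<open>The main theorem: the bounds of UT_central_image applied to the projection.  The
  hypotheses n \<ge> 3 and m \<ge> 2 only ensure that the statements are not vacuous.\<close>

theorem mainTheorem1:
  fixes n m :: nat
  assumes "n \<ge> 3" and "m \<ge> 2"
  defines "F \<equiv> free_grp n"
  shows
    "(\<forall>i j. 1 \<le> i \<and> i < j - 1 \<and> j - 1 \<le> n - 2 \<longrightarrow>
        group.ord (Q n m) (proj n m (comm F (gen i) (gen j))) dvd m)
   \<and> (\<forall>i. 1 \<le> i \<and> i \<le> n - 2 \<longrightarrow>
        group.ord (Q n m) (proj n m (comm F (comm F (gen i) (gen (i+1))) (gen i))) dvd m
      \<and> group.ord (Q n m)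
          (proj n m (comm F (comm F (gen i) (gen (i+1))) (gen i \<otimes>\<^bsub>F\<^esub> inv\<^bsub>F\<^esub> gen (i+1))))
          dvd gcd m (m choose 2))
   \<and> (\<forall>i. 1 \<le> i \<and> i \<le> n - 3 \<longrightarrow>
        group.ord (Q n m)
          (proj n m (comm F (comm F (gen i) (gen (i+1))) (comm F (gen (i+1)) (gen (i+2)))))
          dvd gcd 2 m)"
proof -
  interpret UT_central_image n m "Q n m" "proj n m"
    by (rule projection_is_UT_central_image)
  show ?thesis
    unfolding F_def
    using order_far_comm order_comm_comm_gen order_comm_comm_mult_inv order_comm_comm_adjacent
    by blast
qed

end
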